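(* Let $n\in\{2,3\}$ and $f\in\mathfrak{F}_{sc}$. For every density matrix $\rho$ on $\mathbb{C}^n$ with diagonal entries $\rho_{11},\dots,\rho_{nn}$ in the reference basis, $$\max_{\mathfrak{D}}\bar C_f(\mathfrak{D})=f(\rho_{11},\dots,\rho_{nn}),$$ where the maximum is over all pure state decompositions $\mathfrak{D}$ of $\rho$ (and is attained).
   Context: Fix the reference orthonormal basis $\{|i\rangle\}_{i=1}^n$ of $\mathbb{C}^n$. Let $\Omega$ be the probability simplex in $\mathbb{R}^n$. $\mathfrak{F}_{sc}$ denotes the set of functions $f:\Omega\to\mathbb{R}$ such that (i) $f((1,0,\dots,0)^T)=0$; (ii) $f(P\mathbf{x})=f(\mathbf{x})$ for every permutation matrix $P$; (iii) $f$ is concave. For a unit vector $|\psi\rangle=\sum_i\psi_i|i\rangle$, $C_f(|\psi\rangle)=f(|\psi_1|^2,\dots,|\psi_n|^2)$. A pure state decomposition of $\rho$ is a finite family $\{p_k,|\psi_k\rangle\}$ with $p_k>0$, $\sum_kp_k=1$, unit vectors $|\psi_k\rangle$ and $\rho=\sum_kp_k|\psi_k\rangle\langle\psi_k|$; its average coherence is $\bar C_f(\mathfrak{D})=\sum_kp_kC_f(|\psi_k\rangle)$. *)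

theory Defs
  imports "HOL-Analysis.Analysis" "HOL-Combinatorics.Permutations"
begin

text \<open>Vectors in R^n / C^n are functions on nat, meaningful on indices 0..n-1
  (index i here corresponds to basis vector |i+1> of the paper).
  Matrices are functions nat => nat => complex, meaningful on {0..<n}^2.\<close>

definition prob_simplex :: "nat \<Rightarrow> (nat \<Rightarrow> real) set" where
  "prob_simplex n = {x. (\<forall>i<n. 0 \<le> x i) \<and> (\<forall>i\<ge>n. x i = 0) \<and> (\<Sum>i<n. x i) = 1}"

definition e1 :: "nat \<Rightarrow> real" where
  "e1 = (\<lambda>i. if i = 0 then 1 else 0)"

definition F_sc :: "nat \<Rightarrow> ((nat \<Rightarrow> real) \<Rightarrow> real) set" where
  "F_sc n = {f.
      f e1 = 0
    \<and> (\<forall>x\<in>prob_simplex n. \<forall>p. p permutes {..<n} \<longrightarrow> f (x \<circ> p) = f x)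
    \<and> (\<forall>x\<in>prob_simplex n. \<forall>y\<in>prob_simplex n. \<forall>t::real. 0 \<le> t \<and> t \<le> 1 \<longrightarrow>
          t * f x + (1 - t) * f y \<le> f (\<lambda>i. t * x i + (1 - t) * y i))}"

definition density_matrix :: "nat \<Rightarrow> (nat \<Rightarrow> nat \<Rightarrow> complex) \<Rightarrow> bool" where
  "density_matrix n \<rho> \<longleftrightarrow>
     (\<forall>i<n. \<forall>j<n. \<rho> j i = cnj (\<rho> i j))
   \<and> (\<forall>v::nat \<Rightarrow> complex. 0 \<le> Re (\<Sum>i<n. \<Sum>j<n. cnj (v i) * \<rho> i j * v j))
   \<and> (\<Sum>i<n. \<rho> i i) = 1"

definition unit_vec :: "nat \<Rightarrow> (nat \<Rightarrow> complex) \<Rightarrow> bool" where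
  "unit_vec n \<psi> \<longleftrightarrow> (\<Sum>i<n. (cmod (\<psi> i))\<^sup>2) = 1"

definition pure_decomp ::
  "nat \<Rightarrow> (nat \<Rightarrow> nat \<Rightarrow> complex) \<Rightarrow> (real \<times> (nat \<Rightarrow> complex)) list \<Rightarrow> bool" where
  "pure_decomp n \<rho> D \<longleftrightarrow>
     (\<forall>(p, \<psi>) \<in> set D. 0 < p \<and> unit_vec n \<psi>)
   \<and> (\<Sum>k<length D. fst (D ! k)) = 1
   \<and> (\<forall>i<n. \<forall>j<n. \<rho> i j =
        (\<Sum>k<length D. complex_of_real (fst (D ! k)) * snd (D ! k) i * cnj (snd (D ! k) j)))"

definition coh :: "nat \<Rightarrow> ((nat \<Rightarrow> real) \<Rightarrow> real) \<Rightarrow> (nat \<Rightarrow> complex) \<Rightarrow> real" where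
  "coh n f \<psi> = f (\<lambda>i. if i < n then (cmod (\<psi> i))\<^sup>2 else 0)"

definition avg_coh ::
  "nat \<Rightarrow> ((nat \<Rightarrow> real) \<Rightarrow> real) \<Rightarrow> (real \<times> (nat \<Rightarrow> complex)) list \<Rightarrow> real" where
  "avg_coh n f D = (\<Sum>k<length D. fst (D ! k) * coh n f (snd (D ! k)))"

definition diag_vec :: "nat \<Rightarrow> (nat \<Rightarrow> nat \<Rightarrow> complex) \<Rightarrow> nat \<Rightarrow> real" where
  "diag_vec n \<rho> = (\<lambda>i. if i < n then Re (\<rho> i i) else 0)"

end

theory Submission
  imports Defs
begin

text \<open>The upper bound is Jensen's inequality: the diagonal of \<open>\<rho>\<close> is the weighted average of the
  vectors \<open>(|\<psi>\<^sub>k i|\<^sup>2)\<^sub>i\<close> of any pure state decomposition, and \<open>f\<close> is concave on the simplex.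
  It is attained by a decomposition all of whose states satisfy \<open>|\<psi>\<^sub>k i|\<^sup>2 = \<rho> i i\<close>.
  For \<open>n \<le> 3\<close> (pad \<open>\<rho>\<close> by zeros when \<open>n = 2\<close>) such a decomposition exists: a positive
  semidefinite \<open>3 \<times> 3\<close> matrix can be written with \<open>\<rho> 0 0 = a\<^sup>2\<close>, \<open>\<rho> 1 1 = b\<^sup>2\<close>,
  \<open>\<rho> 0 1 = a b \<alpha>\<close>, \<open>\<rho> 0 2 = a (A + B \<alpha>)\<close>, \<open>\<rho> 1 2 = b (A cnj \<alpha> + B)\<close>, \<open>|\<alpha>| \<le> 1\<close>, and the Schur
  complement bound \<open>|A + B z|\<^sup>2 \<le> \<rho> 2 2\<close> for all unimodular \<open>z\<close> on a suitable chord through \<open>\<alpha>\<close>.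
  Averaging the states \<open>(a, b cnj z, cnj v)\<close> over the two ends \<open>z\<close> of that chord and, for each
  \<open>z\<close>, over two points \<open>v\<close> of the circle \<open>|v|\<^sup>2 = \<rho> 2 2\<close> with mean \<open>A + B z\<close> reproduces \<open>\<rho>\<close>.\<close>

section \<open>Jensen bound\<close>

lemma prob_simplex_sum:
  assumes "finite S" "sum a S = 1" "\<And>k. k \<in> S \<Longrightarrow> 0 \<le> a k"
    and "\<And>k. k \<in> S \<Longrightarrow> y k \<in> prob_simplex n"
  shows "(\<lambda>i. \<Sum>k\<in>S. a k * y k i) \<in> prob_simplex n"
proof -
  have "(\<Sum>i<n. \<Sum>k\<in>S. a k * y k i) = (\<Sum>k\<in>S. a k * (\<Sum>i<n. y k i))"
    by (simp add: sum_distrib_left sum.swap[of _ S])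
  also have "\<dots> = 1"
    using assms(2,4) by (simp add: prob_simplex_def)
  finally show ?thesis
    using assms(3,4) unfolding prob_simplex_def by (auto intro!: sum_nonneg)
qed

lemma F_sc_jensen:
  assumes f: "f \<in> F_sc n" and "finite S" "S \<noteq> {}" "sum a S = 1"
    and "\<And>k. k \<in> S \<Longrightarrow> 0 \<le> a k" "\<And>k. k \<in> S \<Longrightarrow> y k \<in> prob_simplex n"
  shows "(\<Sum>k\<in>S. a k * f (y k)) \<le> f (\<lambda>i. \<Sum>k\<in>S. a k * y k i)"
  using assms(2-)
proof (induction S arbitrary: a rule: finite_ne_induct)
  case (singleton k)
  then show ?case by simp
next
  case (insert k S)
  define s where "s = sum a S"
  have s: "s = 1 - a k" "0 \<le> s"
    using insert.hyps insert.prems unfolding s_def by (auto intro!: sum_nonneg)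
  show ?case
  proof (cases "s = 0")
    case True
    then have "\<forall>j\<in>S. a j = 0"
      using insert.hyps insert.prems unfolding s_def by (simp add: sum_nonneg_eq_0_iff)
    then show ?thesis
      using insert.hyps s True by simp
  next
    case False
    define z where "z = (\<lambda>i. \<Sum>j\<in>S. a j / s * y j i)"
    have weights: "(\<Sum>j\<in>S. a j / s) = 1"
      using False unfolding s_def by (simp add: sum_divide_distrib[symmetric])
    have IH: "(\<Sum>j\<in>S. a j / s * f (y j)) \<le> f z"
      unfolding z_def using insert.prems s weights by (intro insert.IH) auto
    have z: "z \<in> prob_simplex n"
      unfolding z_def using insert.hyps insert.prems s weights by (intro prob_simplex_sum) auto
    have comb: "(\<lambda>i. \<Sum>j\<in>insert k S. a j * y j i) = (\<lambda>i. a k * y k i + (1 - a k) * z i)"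
      using insert.hyps False unfolding z_def s(1)[symmetric] by (simp add: sum_distrib_left)
    have "(\<Sum>j\<in>insert k S. a j * f (y j)) = a k * f (y k) + s * (\<Sum>j\<in>S. a j / s * f (y j))"
      using insert.hyps False by (simp add: sum_distrib_left)
    also have "\<dots> \<le> a k * f (y k) + (1 - a k) * f z"
      using IH s by (simp add: mult_left_mono)
    also have "\<dots> \<le> f (\<lambda>i. a k * y k i + (1 - a k) * z i)"
      using f z insert.prems s unfolding F_sc_def by auto
    finally show ?thesis
      unfolding comb .
  qed
qed

definition abs_sq_vec :: "nat \<Rightarrow> (nat \<Rightarrow> complex) \<Rightarrow> nat \<Rightarrow> real" where
  "abs_sq_vec n \<psi> = (\<lambda>i. if i < n then (cmod (\<psi> i))\<^sup>2 else 0)"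

lemma coh_eq: "coh n f \<psi> = f (abs_sq_vec n \<psi>)"
  unfolding coh_def abs_sq_vec_def ..

lemma abs_sq_vec_in_prob_simplex: "unit_vec n \<psi> \<Longrightarrow> abs_sq_vec n \<psi> \<in> prob_simplex n"
  unfolding abs_sq_vec_def prob_simplex_def unit_vec_def by auto

lemma pure_decomp_diag_vec:
  assumes "pure_decomp n \<rho> D"
  shows "(\<lambda>i. \<Sum>k<length D. fst (D ! k) * abs_sq_vec n (snd (D ! k)) i) = diag_vec n \<rho>"
proof
  fix i
  show "(\<Sum>k<length D. fst (D ! k) * abs_sq_vec n (snd (D ! k)) i) = diag_vec n \<rho> i"
  proof (cases "i < n")
    case True
    have "\<rho> i i = (\<Sum>k<length D. complex_of_real (fst (D ! k)) * snd (D ! k) i * cnj (snd (D ! k) i))"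
      using assms True unfolding pure_decomp_def by blast
    also have "\<dots> = of_real (\<Sum>k<length D. fst (D ! k) * (cmod (snd (D ! k) i))\<^sup>2)"
      unfolding of_real_sum by (rule sum.cong[OF refl]) (metis complex_norm_square mult.assoc of_real_mult)
    finally show ?thesis
      using True unfolding diag_vec_def abs_sq_vec_def by simp
  qed (simp add: diag_vec_def abs_sq_vec_def)
qed

lemma avg_coh_le_diag:
  assumes f: "f \<in> F_sc n" and D: "pure_decomp n \<rho> D"
  shows "avg_coh n f D \<le> f (diag_vec n \<rho>)"
proof -
  have weights: "(\<Sum>k<length D. fst (D ! k)) = 1"
    and members: "\<forall>x\<in>set D. 0 < fst x \<and> unit_vec n (snd x)"
    using D unfolding pure_decomp_def by (auto split: prod.splits)
  have pos: "0 < fst (D ! k) \<and> unit_vec n (snd (D ! k))" if "k < length D" for k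
    using members nth_mem[OF that] by blast
  have "{..<length D} \<noteq> {}"
    using weights by (metis sum.empty zero_neq_one)
  then have "(\<Sum>k<length D. fst (D ! k) * f (abs_sq_vec n (snd (D ! k))))
      \<le> f (\<lambda>i. \<Sum>k<length D. fst (D ! k) * abs_sq_vec n (snd (D ! k)) i)"
    using pos weights by (intro F_sc_jensen[OF f]) (auto intro: abs_sq_vec_in_prob_simplex less_imp_le)
  then show ?thesis
    unfolding avg_coh_def coh_eq pure_decomp_diag_vec[OF D] .
qed

section \<open>Chords of a disc\<close>

lemma cmod_add_mult_sq:
  fixes d z :: complex and t :: real
  assumes "cmod d = 1"
  shows "(cmod (z + of_real t * d))\<^sup>2 = (cmod z)\<^sup>2 + 2 * t * Re (cnj z * d) + t\<^sup>2"
proof -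
  have d: "(Re d)\<^sup>2 + (Im d)\<^sup>2 = 1"
    using assms by (simp add: cmod_def)
  have "(cmod (z + of_real t * d))\<^sup>2 = (Re z + t * Re d)\<^sup>2 + (Im z + t * Im d)\<^sup>2"
    by (simp add: cmod_power2)
  also have "\<dots> = (Re z)\<^sup>2 + (Im z)\<^sup>2 + 2 * t * (Re z * Re d + Im z * Im d) + t\<^sup>2 * ((Re d)\<^sup>2 + (Im d)\<^sup>2)"
    by (simp add: power2_eq_square algebra_simps)
  finally show ?thesis
    using d by (simp add: cmod_power2)
qed

lemma line_meets_circle:
  fixes z d :: complex
  assumes "cmod z \<le> r" "cmod d = 1"
  obtains t1 t2 where "t2 \<le> 0" "0 \<le> t1" "cmod (z + of_real t1 * d) = r" "cmod (z + of_real t2 * d) = r"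
proof -
  define p where "p = Re (cnj z * d)"
  define s where "s = sqrt (p\<^sup>2 + r\<^sup>2 - (cmod z)\<^sup>2)"
  have r: "0 \<le> r"
    using assms(1) norm_ge_zero order_trans by blast
  have "(cmod z)\<^sup>2 \<le> r\<^sup>2"
    using assms(1) by (simp add: power_mono)
  then have disc: "p\<^sup>2 \<le> p\<^sup>2 + r\<^sup>2 - (cmod z)\<^sup>2"
    by linarith
  have s: "s\<^sup>2 = p\<^sup>2 + r\<^sup>2 - (cmod z)\<^sup>2" "\<bar>p\<bar> \<le> s"
    unfolding s_def using order_trans[OF zero_le_power2 disc] disc
    by (simp_all add: real_le_rsqrt)
  have on_circle: "cmod (z + of_real t * d) = r" if "t = - p + s \<or> t = - p - s" for t
  proof -
    have "(cmod (z + of_real t * d))\<^sup>2 = (cmod z)\<^sup>2 - p\<^sup>2 + (t + p)\<^sup>2"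
      unfolding cmod_add_mult_sq[OF assms(2)] p_def by (simp add: power2_eq_square algebra_simps)
    also have "\<dots> = r\<^sup>2"
      using that s(1) by (auto simp: power2_eq_square)
    finally show ?thesis
      using r by (simp add: power2_eq_iff_nonneg)
  qed
  show ?thesis
    by (rule that[OF _ _ on_circle[OF disjI1[OF refl]] on_circle[OF disjI2[OF refl]]])
      (use s(2) in auto)
qed

lemma disc_point_on_chord:
  fixes z w :: complex
  assumes "cmod z \<le> r"
  obtains u1 u2 l where "cmod u1 = r" "cmod u2 = r" "0 \<le> l" "l \<le> 1"
    "of_real l * u1 + of_real (1 - l) * u2 = z" "Re (w * u1) = Re (w * z)" "Re (w * u2) = Re (w * z)"
proof -
  define d where "d = (if w = 0 then 1 else \<i> * cnj w / of_real (cmod w))"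
  have d: "cmod d = 1" "Re (w * d) = 0"
    unfolding d_def by (auto simp: norm_mult norm_divide algebra_simps)
  obtain t1 t2 where t: "t2 \<le> 0" "0 \<le> t1"
    and on_circle: "cmod (z + of_real t1 * d) = r" "cmod (z + of_real t2 * d) = r"
    using line_meets_circle[OF assms d(1)] by blast
  have chord: "Re (w * (z + of_real t * d)) = Re (w * z)" for t
    using d(2) by (simp add: algebra_simps)
  obtain l where l: "0 \<le> l" "l \<le> 1" "l * t1 + (1 - l) * t2 = 0"
  proof (cases "t1 = t2")
    case True
    then show ?thesis
      using t that[of 0] by simp
  next
    case False
    then show ?thesis
      using t that[of "- t2 / (t1 - t2)"] by (simp add: field_simps)
  qed
  have "of_real l * (z + of_real t1 * d) + of_real (1 - l) * (z + of_real t2 * d)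
      = z + of_real (l * t1 + (1 - l) * t2) * d"
    by (simp add: algebra_simps)
  then show ?thesis
    using that[OF on_circle l(1,2)] l(3) chord by simp
qed

section \<open>Positive semidefinite Hermitian \<open>3 \<times> 3\<close> forms\<close>

text \<open>The real quadratic form \<open>v\<^sup>* M v\<close> of the Hermitian \<open>3 \<times> 3\<close> matrix with diagonal
  \<open>d0, d1, d2\<close> and upper entries \<open>r01, r02, r12\<close>, at \<open>v = (x, y, z)\<close>.\<close>

definition herm_form3 ::
  "real \<Rightarrow> real \<Rightarrow> real \<Rightarrow> complex \<Rightarrow> complex \<Rightarrow> complex \<Rightarrow> complex \<Rightarrow> complex \<Rightarrow> complex \<Rightarrow> real" where
  "herm_form3 d0 d1 d2 r01 r02 r12 x y z = d0 * (cmod x)\<^sup>2 + d1 * (cmod y)\<^sup>2 + d2 * (cmod z)\<^sup>2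
     + 2 * Re (cnj x * r01 * y) + 2 * Re (cnj x * r02 * z) + 2 * Re (cnj y * r12 * z)"

lemma cmod_mult_self: "cmod z * cmod z = Re z * Re z + Im z * Im z"
  using cmod_power2[of z] by (simp add: power2_eq_square)

lemmas complex_re_im_simps = cmod_power2 power2_eq_square cmod_mult_self algebra_simps

lemma psd2_minors:
  fixes da db :: real and r :: complex
  assumes psd: "\<And>x y. 0 \<le> da * (cmod x)\<^sup>2 + db * (cmod y)\<^sup>2 + 2 * Re (cnj x * r * y)"
  shows "0 \<le> da" "0 \<le> db" "(cmod r)\<^sup>2 \<le> da * db"
proof -
  show da: "0 \<le> da"
    using psd[of 1 0] by simp
  show "0 \<le> db"
    using psd[of 0 1] by simp
  show "(cmod r)\<^sup>2 \<le> da * db"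
  proof (cases "da = 0")
    case True
    show ?thesis
    proof (rule ccontr)
      assume "\<not> ?thesis"
      then have r: "0 < (cmod r)\<^sup>2"
        using True by simp
      define s where "s = (db + 1) / (2 * (cmod r)\<^sup>2)"
      have "Re (cnj (- of_real s * r) * r * 1) = - s * (cmod r)\<^sup>2"
        by (simp add: complex_re_im_simps)
      moreover have "s * (cmod r)\<^sup>2 = (db + 1) / 2"
        unfolding s_def using r by simp
      ultimately show False
        using psd[of "- of_real s * r" 1] True by simp
    qed
  next
    case False
    then have da': "0 < da"
      using da by simp
    have R: "Re (cnj r * r * complex_of_real (- da)) = - da * (cmod r)\<^sup>2"
      by (simp add: complex_re_im_simps)
    have "0 \<le> da * (cmod r)\<^sup>2 + db * (cmod (complex_of_real (- da)))\<^sup>2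
        + 2 * Re (cnj r * r * complex_of_real (- da))"
      by (rule psd)
    then have "0 \<le> da * (cmod r)\<^sup>2 + db * da\<^sup>2 - 2 * da * (cmod r)\<^sup>2"
      unfolding R by (simp add: norm_of_real)
    then have "0 \<le> da * (da * db - (cmod r)\<^sup>2)"
      by (simp add: algebra_simps power2_eq_square)
    then show ?thesis
      using da' by (simp add: zero_le_mult_iff)
  qed
qed

lemma herm_form3_minors:
  assumes psd: "\<And>x y z. 0 \<le> herm_form3 d0 d1 d2 r01 r02 r12 x y z"
  shows "0 \<le> d0" "0 \<le> d1" "0 \<le> d2"
    "(cmod r01)\<^sup>2 \<le> d0 * d1" "(cmod r02)\<^sup>2 \<le> d0 * d2" "(cmod r12)\<^sup>2 \<le> d1 * d2"
proof -
  have "\<And>x y. 0 \<le> d0 * (cmod x)\<^sup>2 + d1 * (cmod y)\<^sup>2 + 2 * Re (cnj x * r01 * y)"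
    using psd[of _ _ 0] unfolding herm_form3_def by simp
  then show "0 \<le> d0" "0 \<le> d1" "(cmod r01)\<^sup>2 \<le> d0 * d1"
    by (rule psd2_minors)+
  have "\<And>x y. 0 \<le> d0 * (cmod x)\<^sup>2 + d2 * (cmod y)\<^sup>2 + 2 * Re (cnj x * r02 * y)"
    using psd[of _ 0] unfolding herm_form3_def by simp
  then show "0 \<le> d2" "(cmod r02)\<^sup>2 \<le> d0 * d2"
    by (rule psd2_minors)+
  have "\<And>x y. 0 \<le> d1 * (cmod x)\<^sup>2 + d2 * (cmod y)\<^sup>2 + 2 * Re (cnj x * r12 * y)"
    using psd[of 0] unfolding herm_form3_def by simp
  then show "(cmod r12)\<^sup>2 \<le> d1 * d2"
    by (rule psd2_minors)
qed

lemma herm_form3_kernel: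
  assumes psd: "\<And>x y z. 0 \<le> herm_form3 d0 d1 d2 r01 r02 r12 x y z"
    and singular: "(cmod r01)\<^sup>2 = d0 * d1"
  shows "of_real d0 * r12 = cnj r01 * r02"
proof -
  define s where "s = of_real d0 * r12 - cnj r01 * r02"
  define e where "e = 1 / (d2 + 1)"
  define u where "u = - of_real e * cnj s"
  have d2: "0 \<le> d2"
    using herm_form3_minors[OF psd] by simp
  have e: "0 < e" "d2 * e < 1"
    using d2 unfolding e_def by (auto simp: field_simps)
  \<comment> \<open>\<open>(- r01, d0)\<close> lies in the kernel of the singular upper left block\<close>
  have block: "d0 * (cmod (- r01))\<^sup>2 + d1 * (cmod (of_real d0 :: complex))\<^sup>2
      + 2 * Re (cnj (- r01) * r01 * of_real d0) = 0"
  proof -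
    have "Re (cnj (- r01) * r01 * of_real d0) = - d0 * (cmod r01)\<^sup>2"
      by (simp add: complex_re_im_simps)
    then show ?thesis
      using singular by (simp add: power2_eq_square algebra_simps)
  qed
  have cross: "Re (cnj (- r01) * r02 * u) + Re (cnj (of_real d0) * r12 * u) = Re (s * u)"
    unfolding s_def by (simp add: algebra_simps)
  have "0 \<le> herm_form3 d0 d1 d2 r01 r02 r12 (- r01) (of_real d0) u"
    by (rule psd)
  then have "0 \<le> d2 * (cmod u)\<^sup>2 + 2 * Re (s * u)"
    unfolding herm_form3_def using block cross by linarith
  also have "\<dots> = - (cmod s)\<^sup>2 * (e * (2 - d2 * e))"
    unfolding u_def using e by (simp add: norm_mult power_mult_distrib complex_re_im_simps)
  finally have "(cmod s)\<^sup>2 * (e * (2 - d2 * e)) \<le> 0"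
    by simp
  moreover have "0 < e * (2 - d2 * e)"
    using e by simp
  ultimately have "s = 0"
    using e by (auto simp: mult_le_0_iff)
  then show ?thesis
    unfolding s_def by simp
qed

lemma herm_form3_schur:
  assumes psd: "\<And>x y z. 0 \<le> herm_form3 d0 d1 d2 r01 r02 r12 x y z"
    and a: "0 < a" "a * a = d0" and b: "0 < b" "b * b = d1"
    and r: "r01 = of_real (a * b) * \<alpha>" "r02 = of_real a * \<beta>" "r12 = of_real b * \<gamma>"
    and AB: "A + B * \<alpha> = \<beta>" "A * cnj \<alpha> + B = \<gamma>"
  shows "(cmod A)\<^sup>2 + (cmod B)\<^sup>2 + 2 * Re (cnj A * B * \<alpha>) \<le> d2"
proof -
  have an: "complex_of_real a \<noteq> 0" and bn: "complex_of_real b \<noteq> 0"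
    using a b by auto
  have x: "d0 * (cmod (- A / of_real a))\<^sup>2 = (cmod A)\<^sup>2"
    unfolding a(2)[symmetric] using a(1) by (simp add: norm_divide power_divide power2_eq_square)
  have y: "d1 * (cmod (- B / of_real b))\<^sup>2 = (cmod B)\<^sup>2"
    unfolding b(2)[symmetric] using b(1) by (simp add: norm_divide power_divide power2_eq_square)
  have xy: "cnj (- A / of_real a) * r01 * (- B / of_real b) = cnj A * B * \<alpha>"
    unfolding r using an bn by (simp add: field_simps)
  have xz: "cnj (- A / of_real a) * r02 * 1 = - (cnj A * A) - cnj A * B * \<alpha>"
    unfolding r AB(1)[symmetric] using an by (simp add: field_simps)
  have yz: "cnj (- B / of_real b) * r12 * 1 = - (cnj B * A * cnj \<alpha>) - cnj B * B"
    unfolding r AB(2)[symmetric] using bn by (simp add: field_simps)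
  have "Re (- (cnj A * A) - cnj A * B * \<alpha>) = - (cmod A)\<^sup>2 - Re (cnj A * B * \<alpha>)"
    and "Re (- (cnj B * A * cnj \<alpha>) - cnj B * B) = - Re (cnj A * B * \<alpha>) - (cmod B)\<^sup>2"
    by (simp_all add: complex_re_im_simps)
  moreover have "0 \<le> herm_form3 d0 d1 d2 r01 r02 r12 (- A / of_real a) (- B / of_real b) 1"
    by (rule psd)
  ultimately show ?thesis
    unfolding herm_form3_def x y xy xz yz by simp
qed

lemma cmod_divide_sq_le:
  assumes "(cmod r)\<^sup>2 \<le> c\<^sup>2 * k" "0 < c"
  shows "(cmod (r / of_real c))\<^sup>2 \<le> k"
  using assms by (simp add: norm_divide power_divide divide_le_eq mult.commute)

lemma eq_of_real_mult_divide:
  assumes "(cmod r)\<^sup>2 \<le> c\<^sup>2 * k" "0 \<le> c"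
  shows "r = of_real c * (r / of_real c)"
  using assms by (cases "c = 0") auto

lemma herm_form3_scaling:
  assumes psd: "\<And>x y z. 0 \<le> herm_form3 d0 d1 d2 r01 r02 r12 x y z"
  obtains a b \<alpha> \<beta> \<gamma> where "0 \<le> a" "a * a = d0" "0 \<le> b" "b * b = d1"
    "r01 = of_real (a * b) * \<alpha>" "r02 = of_real a * \<beta>" "r12 = of_real b * \<gamma>"
    "cmod \<alpha> \<le> 1" "a * b = 0 \<Longrightarrow> \<alpha> = 0"
    "0 < a \<Longrightarrow> (cmod \<beta>)\<^sup>2 \<le> d2" "0 < b \<Longrightarrow> (cmod \<gamma>)\<^sup>2 \<le> d2"
    "a = 0 \<Longrightarrow> \<beta> = 0" "b = 0 \<Longrightarrow> \<gamma> = 0"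
proof -
  note minors = herm_form3_minors[OF psd]
  define a where "a = sqrt d0"
  define b where "b = sqrt d1"
  have a: "0 \<le> a" "a * a = d0" and b: "0 \<le> b" "b * b = d1"
    using minors unfolding a_def b_def by auto
  have ab: "0 \<le> a * b"
    using a b by simp
  have bound01: "(cmod r01)\<^sup>2 \<le> (a * b)\<^sup>2 * 1"
    using minors(4) unfolding a(2)[symmetric] b(2)[symmetric] by (simp add: power2_eq_square algebra_simps)
  have bound02: "(cmod r02)\<^sup>2 \<le> a\<^sup>2 * d2"
    using minors(5) unfolding a(2)[symmetric] by (simp add: power2_eq_square)
  have bound12: "(cmod r12)\<^sup>2 \<le> b\<^sup>2 * d2"
    using minors(6) unfolding b(2)[symmetric] by (simp add: power2_eq_square)
  have "cmod (r01 / of_real (a * b)) \<le> 1"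
  proof (cases "a * b = 0")
    case False
    then have "0 < a * b"
      using ab by linarith
    from cmod_divide_sq_le[OF bound01 this] show ?thesis
      by (simp add: power_le_one_iff)
  qed auto
  then show ?thesis
    using that[OF a b eq_of_real_mult_divide[OF bound01 ab] eq_of_real_mult_divide[OF bound02 a(1)]
        eq_of_real_mult_divide[OF bound12 b(1)]]
      cmod_divide_sq_le[OF bound02] cmod_divide_sq_le[OF bound12]
    by simp
qed

lemma gram_system_solvable:
  fixes \<alpha> \<beta> \<gamma> :: complex
  assumes "cmod \<alpha> < 1"
  obtains A B where "A + B * \<alpha> = \<beta>" "A * cnj \<alpha> + B = \<gamma>"
proof -
  define \<delta> where "\<delta> = 1 - \<alpha> * cnj \<alpha>"
  have "\<delta> = of_real (1 - (cmod \<alpha>)\<^sup>2)"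
    unfolding \<delta>_def by (metis complex_norm_square of_real_1 of_real_diff)
  moreover have "(cmod \<alpha>)\<^sup>2 < 1"
    using assms by (simp add: power_less_one_iff)
  ultimately have "\<delta> \<noteq> 0"
    by (metis diff_gt_0_iff_gt less_irrefl of_real_eq_0_iff)
  show ?thesis
  proof (rule that)
    have "(\<beta> - \<alpha> * \<gamma>) + (\<gamma> - cnj \<alpha> * \<beta>) * \<alpha> = \<beta> * \<delta>"
      unfolding \<delta>_def by (simp add: algebra_simps)
    then show "(\<beta> - \<alpha> * \<gamma>) / \<delta> + (\<gamma> - cnj \<alpha> * \<beta>) / \<delta> * \<alpha> = \<beta>"
      using \<open>\<delta> \<noteq> 0\<close> by (simp add: field_simps)
    have "(\<beta> - \<alpha> * \<gamma>) * cnj \<alpha> + (\<gamma> - cnj \<alpha> * \<beta>) = \<gamma> * \<delta>"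
      unfolding \<delta>_def by (simp add: algebra_simps)
    then show "(\<beta> - \<alpha> * \<gamma>) / \<delta> * cnj \<alpha> + (\<gamma> - cnj \<alpha> * \<beta>) / \<delta> = \<gamma>"
      using \<open>\<delta> \<noteq> 0\<close> by (simp add: field_simps)
  qed
qed

lemma herm_form3_parametrization:
  assumes psd: "\<And>x y z. 0 \<le> herm_form3 d0 d1 d2 r01 r02 r12 x y z"
  obtains a b \<alpha> A B where "0 \<le> a" "a * a = d0" "0 \<le> b" "b * b = d1" "cmod \<alpha> \<le> 1"
    "r01 = of_real (a * b) * \<alpha>" "r02 = of_real a * (A + B * \<alpha>)" "r12 = of_real b * (A * cnj \<alpha> + B)"
    "(cmod A)\<^sup>2 + (cmod B)\<^sup>2 + 2 * Re (cnj A * B * \<alpha>) \<le> d2"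
proof -
  obtain a b \<alpha> \<beta> \<gamma> where a: "0 \<le> a" "a * a = d0" and b: "0 \<le> b" "b * b = d1"
    and r: "r01 = of_real (a * b) * \<alpha>" "r02 = of_real a * \<beta>" "r12 = of_real b * \<gamma>"
    and \<alpha>: "cmod \<alpha> \<le> 1" "a * b = 0 \<Longrightarrow> \<alpha> = 0"
    and bounds: "0 < a \<Longrightarrow> (cmod \<beta>)\<^sup>2 \<le> d2" "0 < b \<Longrightarrow> (cmod \<gamma>)\<^sup>2 \<le> d2"
    and zeros: "a = 0 \<Longrightarrow> \<beta> = 0" "b = 0 \<Longrightarrow> \<gamma> = 0"
    using herm_form3_scaling[OF psd] by blast
  have d2: "0 \<le> d2"
    using herm_form3_minors[OF psd] by simp
  have "\<exists>A B. A + B * \<alpha> = \<beta> \<and> A * cnj \<alpha> + B = \<gamma> \<and> (cmod A)\<^sup>2 + (cmod B)\<^sup>2 + 2 * Re (cnj A * B * \<alpha>) \<le> d2"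
  proof (cases "a * b = 0")
    case True
    have "(cmod \<beta>)\<^sup>2 + (cmod \<gamma>)\<^sup>2 \<le> d2"
    proof (cases "a = 0")
      case True
      then show ?thesis
        using zeros bounds(2) b(1) d2 by (cases "b = 0") auto
    next
      case False
      then have "b = 0"
        using \<open>a * b = 0\<close> by simp
      then show ?thesis
        using False a(1) zeros(2) bounds(1) by simp
    qed
    then show ?thesis
      using \<alpha>(2)[OF True] by auto
  next
    case False
    then have pos: "0 < a" "0 < b"
      using a(1) b(1) by auto
    show ?thesis
    proof (cases "cmod \<alpha> = 1")
      case True
      then have "(cmod r01)\<^sup>2 = d0 * d1"
        unfolding r a(2)[symmetric] b(2)[symmetric] using pos
        by (simp add: norm_mult power2_eq_square)
      from herm_form3_kernel[OF psd this]
      have "of_real (a * a * b) * \<gamma> = of_real (a * a * b) * (cnj \<alpha> * \<beta>)"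
        unfolding r a(2)[symmetric] by (simp add: algebra_simps)
      then have "\<gamma> = \<beta> * cnj \<alpha>"
        using pos by simp
      then show ?thesis
        using bounds(1)[OF pos(1)] by (intro exI[of _ \<beta>] exI[of _ 0]) simp
    next
      case False
      then obtain A B where AB: "A + B * \<alpha> = \<beta>" "A * cnj \<alpha> + B = \<gamma>"
        using gram_system_solvable \<alpha>(1) by (metis order_less_le)
      then show ?thesis
        using herm_form3_schur[OF psd pos(1) a(2) pos(2) b(2) r AB] by blast
    qed
  qed
  then show ?thesis
    using that[OF a b \<alpha>(1) r(1)] r(2,3) by blast
qed

section \<open>Ensembles of states with prescribed moduli\<close>

definition ensemble_matrix :: "(real \<times> (nat \<Rightarrow> complex)) list \<Rightarrow> nat \<Rightarrow> nat \<Rightarrow> complex" where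
  "ensemble_matrix L i j = (\<Sum>(p, \<psi>)\<leftarrow>L. of_real p * \<psi> i * cnj (\<psi> j))"

definition uniform_ensemble :: "nat \<Rightarrow> (nat \<Rightarrow> real) \<Rightarrow> (real \<times> (nat \<Rightarrow> complex)) list \<Rightarrow> bool" where
  "uniform_ensemble n d L \<longleftrightarrow>
     (\<forall>(p, \<psi>)\<in>set L. 0 \<le> p \<and> (\<forall>i<n. (cmod (\<psi> i))\<^sup>2 = d i)) \<and> sum_list (map fst L) = 1"

definition mix :: "real \<Rightarrow> (real \<times> 'a) list \<Rightarrow> (real \<times> 'a) list \<Rightarrow> (real \<times> 'a) list" where
  "mix l L1 L2 = map (\<lambda>(p, x). (l * p, x)) L1 @ map (\<lambda>(p, x). ((1 - l) * p, x)) L2"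

lemma sum_list_map_scale_weights:
  "(\<Sum>(p, x)\<leftarrow>map (\<lambda>(p, x). (c * p, x)) L. of_real p * g x) = of_real c * (\<Sum>(p, x)\<leftarrow>L. of_real p * g x)"
  for g :: "'a \<Rightarrow> complex"
  by (induction L) (auto simp: algebra_simps)

lemma sum_list_weights_mix:
  "sum_list (map fst (mix l L1 L2)) = l * sum_list (map fst L1) + (1 - l) * sum_list (map fst L2)"
  unfolding mix_def by (simp add: case_prod_beta o_def sum_list_const_mult)

lemma ensemble_matrix_mix:
  "ensemble_matrix (mix l L1 L2) i j = of_real l * ensemble_matrix L1 i j + of_real (1 - l) * ensemble_matrix L2 i j"
  unfolding ensemble_matrix_def mix_def
  using sum_list_map_scale_weights[where g = "\<lambda>\<psi>. \<psi> i * cnj (\<psi> j)"]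
  by (simp add: mult.assoc)

lemma uniform_ensemble_mix:
  assumes "0 \<le> l" "l \<le> 1" "uniform_ensemble n d L1" "uniform_ensemble n d L2"
  shows "uniform_ensemble n d (mix l L1 L2)"
  using assms unfolding uniform_ensemble_def sum_list_weights_mix by (auto simp: mix_def)

lemma ensemble_matrix_cnj: "ensemble_matrix L j i = cnj (ensemble_matrix L i j)"
  unfolding ensemble_matrix_def by (induction L) auto

lemma ensemble_matrix_diag:
  assumes "uniform_ensemble n d L" "i < n"
  shows "ensemble_matrix L i i = of_real (d i)"
proof -
  have "ensemble_matrix L i i = (\<Sum>(p, \<psi>)\<leftarrow>L. of_real (p * d i))"
    unfolding ensemble_matrix_def
  proof (intro arg_cong[where f = sum_list] map_cong refl)
    fix x assume "x \<in> set L"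
    then have "(cmod (snd x i))\<^sup>2 = d i"
      using assms unfolding uniform_ensemble_def by auto
    then have "snd x i * cnj (snd x i) = of_real (d i)"
      by (metis complex_norm_square)
    then show "(\<lambda>(p, \<psi>). of_real p * \<psi> i * cnj (\<psi> i)) x = (\<lambda>(p, \<psi>). of_real (p * d i)) x"
      by (simp add: case_prod_beta mult.assoc)
  qed
  also have "\<dots> = of_real (sum_list (map fst L) * d i)"
    by (induction L) (auto simp: algebra_simps)
  finally show ?thesis
    using assms unfolding uniform_ensemble_def by simp
qed

definition phase_state :: "real \<Rightarrow> real \<Rightarrow> complex \<Rightarrow> complex \<Rightarrow> nat \<Rightarrow> complex" where
  "phase_state a b z v =
     (\<lambda>i. if i = 0 then of_real a else if i = 1 then of_real b * cnj z else if i = 2 then cnj v else 0)"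

lemma ensemble_matrix_phase_state:
  "ensemble_matrix [(1, phase_state a b z v)] 0 1 = of_real (a * b) * z"
  "ensemble_matrix [(1, phase_state a b z v)] 0 2 = of_real a * v"
  "ensemble_matrix [(1, phase_state a b z v)] 1 2 = of_real b * (cnj z * v)"
  unfolding ensemble_matrix_def phase_state_def by simp_all

lemma uniform_ensemble_phase_state:
  assumes "0 \<le> a" "0 \<le> b" "cmod z = 1" "cmod v = c" "d 0 = a\<^sup>2" "d 1 = b\<^sup>2" "d 2 = c\<^sup>2"
  shows "uniform_ensemble 3 d [(1, phase_state a b z v)]"
proof -
  have "i < 3 \<longleftrightarrow> i = 0 \<or> i = 1 \<or> i = 2" for i :: nat
    by auto
  then show ?thesis
    using assms unfolding uniform_ensemble_def phase_state_def by (auto simp: norm_mult)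
qed

lemma uniform_ensemble_fiber:
  assumes "0 \<le> a" "0 \<le> b" "cmod z = 1" "cmod N \<le> c" "d 0 = a\<^sup>2" "d 1 = b\<^sup>2" "d 2 = c\<^sup>2"
  obtains L where "uniform_ensemble 3 d L" "ensemble_matrix L 0 1 = of_real (a * b) * z"
    "ensemble_matrix L 0 2 = of_real a * N" "ensemble_matrix L 1 2 = of_real b * (cnj z * N)"
proof -
  obtain V1 V2 m where V: "cmod V1 = c" "cmod V2 = c" and m: "0 \<le> m" "m \<le> 1"
    and N: "of_real m * V1 + of_real (1 - m) * V2 = N"
    using disc_point_on_chord[OF assms(4), of 0] by blast
  define L where "L = mix m [(1, phase_state a b z V1)] [(1, phase_state a b z V2)]"
  show ?thesis
  proof (rule that)
    show "uniform_ensemble 3 d L"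
      unfolding L_def using assms V m by (intro uniform_ensemble_mix uniform_ensemble_phase_state)
    show "ensemble_matrix L 0 1 = of_real (a * b) * z"
      unfolding L_def ensemble_matrix_mix ensemble_matrix_phase_state by (simp add: algebra_simps)
    show "ensemble_matrix L 0 2 = of_real a * N"
      unfolding L_def ensemble_matrix_mix ensemble_matrix_phase_state N[symmetric] by (simp add: algebra_simps)
    show "ensemble_matrix L 1 2 = of_real b * (cnj z * N)"
      unfolding L_def ensemble_matrix_mix ensemble_matrix_phase_state N[symmetric] by (simp add: algebra_simps)
  qed
qed

lemma cmod_add_mult_unit_sq:
  assumes "cmod z = 1"
  shows "(cmod (A + B * z))\<^sup>2 = (cmod A)\<^sup>2 + (cmod B)\<^sup>2 + 2 * Re (cnj A * B * z)"
proof -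
  have "(cmod (A + B * z))\<^sup>2 = (cmod A)\<^sup>2 + (cmod B)\<^sup>2 * (cmod z)\<^sup>2 + 2 * Re (cnj A * B * z)"
    by (simp add: complex_re_im_simps)
  then show ?thesis
    using assms by simp
qed

lemma cnj_mult_self_unit: "cmod z = 1 \<Longrightarrow> cnj z * z = 1"
  by (metis complex_norm_square mult.commute of_real_1 one_power2)

lemma herm_form3_uniform_ensemble:
  assumes psd: "\<And>x y z. 0 \<le> herm_form3 (d 0) (d 1) (d 2) r01 r02 r12 x y z"
  obtains L where "uniform_ensemble 3 d L"
    "ensemble_matrix L 0 1 = r01" "ensemble_matrix L 0 2 = r02" "ensemble_matrix L 1 2 = r12"
proof -
  obtain a b \<alpha> A B where a: "0 \<le> a" "a * a = d 0" and b: "0 \<le> b" "b * b = d 1"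
    and \<alpha>: "cmod \<alpha> \<le> 1" and r: "r01 = of_real (a * b) * \<alpha>" "r02 = of_real a * (A + B * \<alpha>)"
      "r12 = of_real b * (A * cnj \<alpha> + B)"
    and schur: "(cmod A)\<^sup>2 + (cmod B)\<^sup>2 + 2 * Re (cnj A * B * \<alpha>) \<le> d 2"
    using herm_form3_parametrization[OF psd] by blast
  define c where "c = sqrt (d 2)"
  have d: "d 0 = a\<^sup>2" "d 1 = b\<^sup>2" "d 2 = c\<^sup>2"
    using a b herm_form3_minors(3)[OF psd] unfolding c_def by (simp_all add: power2_eq_square)
  \<comment> \<open>Along a chord orthogonal to \<open>cnj A * B\<close> the modulus of \<open>A + B * Z\<close> stays within the Schur bound.\<close>
  obtain Z1 Z2 l where Z: "cmod Z1 = 1" "cmod Z2 = 1" and l: "0 \<le> l" "l \<le> 1"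
    and \<alpha>_avg: "of_real l * Z1 + of_real (1 - l) * Z2 = \<alpha>"
    and chord: "Re (cnj A * B * Z1) = Re (cnj A * B * \<alpha>)" "Re (cnj A * B * Z2) = Re (cnj A * B * \<alpha>)"
    using disc_point_on_chord[OF \<alpha>, of "cnj A * B"] by blast
  have N: "cmod (A + B * Z) \<le> c" if "cmod Z = 1" "Re (cnj A * B * Z) = Re (cnj A * B * \<alpha>)" for Z
    using schur unfolding c_def by (intro real_le_rsqrt) (simp only: cmod_add_mult_unit_sq that)
  obtain L1 where L1: "uniform_ensemble 3 d L1" "ensemble_matrix L1 0 1 = of_real (a * b) * Z1"
    "ensemble_matrix L1 0 2 = of_real a * (A + B * Z1)" "ensemble_matrix L1 1 2 = of_real b * (cnj Z1 * (A + B * Z1))"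
    using uniform_ensemble_fiber[OF a(1) b(1) Z(1) N[OF Z(1) chord(1)] d] by blast
  obtain L2 where L2: "uniform_ensemble 3 d L2" "ensemble_matrix L2 0 1 = of_real (a * b) * Z2"
    "ensemble_matrix L2 0 2 = of_real a * (A + B * Z2)" "ensemble_matrix L2 1 2 = of_real b * (cnj Z2 * (A + B * Z2))"
    using uniform_ensemble_fiber[OF a(1) b(1) Z(2) N[OF Z(2) chord(2)] d] by blast
  have \<alpha>_avg_cnj: "of_real l * cnj Z1 + of_real (1 - l) * cnj Z2 = cnj \<alpha>"
    using arg_cong[OF \<alpha>_avg, of cnj] by simp
  show ?thesis
  proof (rule that[of "mix l L1 L2"])
    show "uniform_ensemble 3 d (mix l L1 L2)"
      using l L1(1) L2(1) by (rule uniform_ensemble_mix)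
    show "ensemble_matrix (mix l L1 L2) 0 1 = r01"
      unfolding ensemble_matrix_mix L1 L2 r(1) \<alpha>_avg[symmetric] by (simp add: algebra_simps)
    have "of_real l * (A + B * Z1) + of_real (1 - l) * (A + B * Z2) = A + B * \<alpha>"
      unfolding \<alpha>_avg[symmetric] by (simp add: algebra_simps)
    then show "ensemble_matrix (mix l L1 L2) 0 2 = r02"
      unfolding ensemble_matrix_mix L1 L2 r(2) by (metis mult.left_commute distrib_left)
    have "of_real l * (cnj Z1 * (A + B * Z1)) + of_real (1 - l) * (cnj Z2 * (A + B * Z2)) = A * cnj \<alpha> + B"
      unfolding \<alpha>_avg_cnj[symmetric]
      using cnj_mult_self_unit[OF Z(1)] cnj_mult_self_unit[OF Z(2)] by (simp add: algebra_simps)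
    then show "ensemble_matrix (mix l L1 L2) 1 2 = r12"
      unfolding ensemble_matrix_mix L1 L2 r(3) by (metis mult.left_commute distrib_left)
  qed
qed

section \<open>Density matrices of dimension 2 and 3\<close>

lemma sum_lessThan_3: "(\<Sum>i<3. g i) = g 0 + g 1 + g 2" for g :: "nat \<Rightarrow> 'a::comm_monoid_add"
  by (simp add: numeral_3_eq_3 numeral_2_eq_2 lessThan_Suc add.commute add.left_commute)

lemma herm_form3_of_matrix:
  fixes M :: "nat \<Rightarrow> nat \<Rightarrow> complex"
  assumes herm: "\<forall>i<3. \<forall>j<3. M j i = cnj (M i j)"
  shows "Re (\<Sum>i<3. \<Sum>j<3. cnj (v i) * M i j * v j)
       = herm_form3 (Re (M 0 0)) (Re (M 1 1)) (Re (M 2 2)) (M 0 1) (M 0 2) (M 1 2) (v 0) (v 1) (v 2)"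
proof -
  have herm': "M j i = cnj (M i j)" if "i < 3" "j < 3" for i j
    using herm that by blast
  have real_diag: "M i i = of_real (Re (M i i))" if "i < 3" for i
    using herm'[OF that that] by (simp add: complex_eq_iff)
  have lower: "M 1 0 = cnj (M 0 1)" "M 2 0 = cnj (M 0 2)" "M 2 1 = cnj (M 1 2)"
    using herm'[of 0 1] herm'[of 0 2] herm'[of 1 2] by simp_all
  have diag: "Re (cnj x * of_real d * x) = d * (cmod x)\<^sup>2" for x and d :: real
    by (simp add: complex_re_im_simps)
  have off_diag: "Re (cnj y * cnj r * x) = Re (cnj x * r * y)" for x y r :: complex
    by (simp add: algebra_simps)
  obtain d0 d1 d2 where real_diag: "M 0 0 = of_real d0" "M 1 1 = of_real d1" "M 2 2 = of_real d2"
    using real_diag[of 0] real_diag[of 1] real_diag[of 2] by simp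
  show ?thesis
    unfolding sum_lessThan_3 lower real_diag plus_complex.sel diag off_diag herm_form3_def
    by simp
qed

lemma quadratic_form_zero_pad:
  fixes \<rho> :: "nat \<Rightarrow> nat \<Rightarrow> complex"
  assumes "n \<le> m"
  shows "(\<Sum>i<m. \<Sum>j<m. cnj (v i) * (if i < n \<and> j < n then \<rho> i j else 0) * v j)
       = (\<Sum>i<n. \<Sum>j<n. cnj (v i) * \<rho> i j * v j)"
proof -
  have restrict: "(\<Sum>j<m. if j < n then g j else 0) = (\<Sum>j<n. g j)" for g :: "nat \<Rightarrow> complex"
  proof -
    have "{..<m} \<inter> {j. j < n} = {..<n}"
      using assms by auto
    then show ?thesis
      by (simp add: sum.If_cases)
  qed
  have "(\<Sum>j<m. cnj (v i) * (if i < n \<and> j < n then \<rho> i j else 0) * v j)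
      = (if i < n then \<Sum>j<n. cnj (v i) * \<rho> i j * v j else 0)" for i
  proof (cases "i < n")
    case True
    then have "(\<Sum>j<m. cnj (v i) * (if i < n \<and> j < n then \<rho> i j else 0) * v j)
        = (\<Sum>j<m. if j < n then cnj (v i) * \<rho> i j * v j else 0)"
      by (intro sum.cong) auto
    then show ?thesis
      using True restrict by simp
  qed simp
  then show ?thesis
    using restrict by simp
qed

lemma psd3_uniform_ensemble:
  fixes M :: "nat \<Rightarrow> nat \<Rightarrow> complex"
  assumes herm: "\<forall>i<3. \<forall>j<3. M j i = cnj (M i j)"
    and psd: "\<forall>v. 0 \<le> Re (\<Sum>i<3. \<Sum>j<3. cnj (v i) * M i j * v j)"
  obtains L where "uniform_ensemble 3 (\<lambda>i. Re (M i i)) L" "\<forall>i<3. \<forall>j<3. ensemble_matrix L i j = M i j"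
proof -
  have "0 \<le> herm_form3 (Re (M 0 0)) (Re (M 1 1)) (Re (M 2 2)) (M 0 1) (M 0 2) (M 1 2) x y z" for x y z
  proof -
    define v :: "nat \<Rightarrow> complex" where "v = (\<lambda>i. if i = 0 then x else if i = 1 then y else z)"
    have "0 \<le> herm_form3 (Re (M 0 0)) (Re (M 1 1)) (Re (M 2 2)) (M 0 1) (M 0 2) (M 1 2) (v 0) (v 1) (v 2)"
      unfolding herm_form3_of_matrix[OF herm, symmetric] using psd by blast
    then show ?thesis
      by (simp add: v_def)
  qed
  then obtain L where L: "uniform_ensemble 3 (\<lambda>i. Re (M i i)) L"
    "ensemble_matrix L 0 1 = M 0 1" "ensemble_matrix L 0 2 = M 0 2" "ensemble_matrix L 1 2 = M 1 2"
    using herm_form3_uniform_ensemble[where d = "\<lambda>i. Re (M i i)"] by blast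
  have upper: "ensemble_matrix L i j = M i j" if "i < j" "j < 3" for i j
  proof -
    have "i = 0 \<and> j = 1 \<or> i = 0 \<and> j = 2 \<or> i = 1 \<and> j = 2"
      using that by auto
    then show ?thesis
      using L(2-4) by blast
  qed
  have "ensemble_matrix L i j = M i j" if "i < 3" "j < 3" for i j
  proof (cases i j rule: linorder_cases)
    case less
    then show ?thesis
      using upper that by blast
  next
    case equal
    have "M i i = cnj (M i i)"
      using herm that by blast
    then show ?thesis
      using ensemble_matrix_diag[OF L(1) that(1)] equal by (simp add: complex_eq_iff)
  next
    case greater
    have "M i j = cnj (M j i)"
      using herm that by blast
    then show ?thesis
      using upper[OF greater that(1)] ensemble_matrix_cnj[of L i j] by simp
  qed
  then show ?thesis
    using that L(1) by blast
qed

lemma uniform_ensemble_filter_pos: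
  assumes "uniform_ensemble n d L"
  shows "uniform_ensemble n d (filter (\<lambda>x. 0 < fst x) L)"
    and "ensemble_matrix (filter (\<lambda>x. 0 < fst x) L) = ensemble_matrix L"
proof -
  have zero: "fst x = 0" if "x \<in> set L" "\<not> 0 < fst x" for x
    using assms that unfolding uniform_ensemble_def by (auto simp: case_prod_beta)
  have "sum_list (map fst (filter (\<lambda>x. 0 < fst x) L)) = sum_list (map fst L)"
    by (rule sum_list_map_filter) (use zero in auto)
  then show "uniform_ensemble n d (filter (\<lambda>x. 0 < fst x) L)"
    using assms unfolding uniform_ensemble_def by auto
  show "ensemble_matrix (filter (\<lambda>x. 0 < fst x) L) = ensemble_matrix L"
    unfolding ensemble_matrix_def by (intro ext sum_list_map_filter) (use zero in auto)
qed

lemma ensemble_matrix_conv_sum: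
  "ensemble_matrix L i j = (\<Sum>k<length L. of_real (fst (L ! k)) * snd (L ! k) i * cnj (snd (L ! k) j))"
  unfolding ensemble_matrix_def by (simp add: sum_list_sum_nth atLeast0LessThan case_prod_beta)

lemma pure_decomp_of_uniform_ensemble:
  assumes dm: "density_matrix n \<rho>" and L: "uniform_ensemble n (diag_vec n \<rho>) L"
    and pos: "\<forall>x\<in>set L. 0 < fst x" and \<rho>: "\<forall>i<n. \<forall>j<n. ensemble_matrix L i j = \<rho> i j"
  shows "pure_decomp n \<rho> L"
proof -
  have unit: "unit_vec n \<psi>" if "(p, \<psi>) \<in> set L" for p \<psi>
  proof -
    have "(\<Sum>i<n. (cmod (\<psi> i))\<^sup>2) = (\<Sum>i<n. Re (\<rho> i i))"
      using L that unfolding uniform_ensemble_def diag_vec_def by auto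
    also have "\<dots> = 1"
      using dm unfolding density_matrix_def by (metis Re_sum one_complex.sel(1))
    finally show ?thesis
      unfolding unit_vec_def .
  qed
  have "(\<Sum>k<length L. fst (L ! k)) = 1"
    using L unfolding uniform_ensemble_def by (simp add: sum_list_sum_nth atLeast0LessThan)
  then show ?thesis
    unfolding pure_decomp_def using pos unit \<rho> by (auto simp: ensemble_matrix_conv_sum)
qed

lemma uniform_ensemble_restrict:
  assumes "uniform_ensemble m d L" "n \<le> m" "\<And>i. i < n \<Longrightarrow> d' i = d i"
  shows "uniform_ensemble n d' L"
  using assms unfolding uniform_ensemble_def by fastforce

lemma abs_sq_vec_of_uniform_ensemble:
  assumes "uniform_ensemble n d L" "x \<in> set L" "\<And>i. n \<le> i \<Longrightarrow> d i = 0"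
  shows "abs_sq_vec n (snd x) = d"
proof
  fix i
  show "abs_sq_vec n (snd x) i = d i"
    using assms unfolding uniform_ensemble_def abs_sq_vec_def
    by (cases "i < n") (auto simp: case_prod_beta)
qed

lemma uniform_pure_decomp_exists:
  assumes n: "n = 2 \<or> n = 3" and dm: "density_matrix n \<rho>"
  obtains D where "pure_decomp n \<rho> D" "\<forall>x\<in>set D. abs_sq_vec n (snd x) = diag_vec n \<rho>"
proof -
  have "n \<le> 3"
    using n by auto
  have herm: "\<rho> j i = cnj (\<rho> i j)" if "i < n" "j < n" for i j
    using dm that unfolding density_matrix_def by blast
  define M where "M i j = (if i < n \<and> j < n then \<rho> i j else 0)" for i j
  have "\<forall>i<3. \<forall>j<3. M j i = cnj (M i j)"
    unfolding M_def by (auto intro: herm)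
  moreover have "\<forall>v. 0 \<le> Re (\<Sum>i<3. \<Sum>j<3. cnj (v i) * M i j * v j)"
    unfolding M_def quadratic_form_zero_pad[OF \<open>n \<le> 3\<close>]
    using dm unfolding density_matrix_def by blast
  ultimately obtain L where L: "uniform_ensemble 3 (\<lambda>i. Re (M i i)) L"
    "\<forall>i<3. \<forall>j<3. ensemble_matrix L i j = M i j"
    by (rule psd3_uniform_ensemble)
  define D where "D = filter (\<lambda>x. 0 < fst x) L"
  have D: "uniform_ensemble n (diag_vec n \<rho>) D"
    unfolding D_def using uniform_ensemble_filter_pos(1)[OF L(1)] \<open>n \<le> 3\<close>
    by (rule uniform_ensemble_restrict) (simp add: M_def diag_vec_def)
  have "ensemble_matrix D i j = \<rho> i j" if "i < n" "j < n" for i j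
  proof -
    have "ensemble_matrix L i j = M i j"
      using L(2) that \<open>n \<le> 3\<close> by auto
    then show ?thesis
      unfolding D_def uniform_ensemble_filter_pos(2)[OF L(1)] M_def using that by simp
  qed
  then have "pure_decomp n \<rho> D"
    using D by (intro pure_decomp_of_uniform_ensemble[OF dm]) (auto simp: D_def)
  moreover have "abs_sq_vec n (snd x) = diag_vec n \<rho>" if "x \<in> set D" for x
    using D that by (rule abs_sq_vec_of_uniform_ensemble) (simp add: diag_vec_def)
  ultimately show ?thesis
    using that by blast
qed

lemma avg_coh_uniform:
  assumes "pure_decomp n \<rho> D" "\<forall>x\<in>set D. abs_sq_vec n (snd x) = c"
  shows "avg_coh n f D = f c"
proof -
  have "avg_coh n f D = (\<Sum>k<length D. fst (D ! k)) * f c"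
    unfolding avg_coh_def coh_eq sum_distrib_right using assms(2) by (simp add: nth_mem)
  then show ?thesis
    using assms(1) unfolding pure_decomp_def by simp
qed

theorem corollary1:
  fixes n :: nat and f :: "(nat \<Rightarrow> real) \<Rightarrow> real" and \<rho> :: "nat \<Rightarrow> nat \<Rightarrow> complex"
  assumes "n = 2 \<or> n = 3"
    and "f \<in> F_sc n"
    and "density_matrix n \<rho>"
  shows "(\<exists>D. pure_decomp n \<rho> D \<and> avg_coh n f D = f (diag_vec n \<rho>))
       \<and> (\<forall>D. pure_decomp n \<rho> D \<longrightarrow> avg_coh n f D \<le> f (diag_vec n \<rho>))"
proof
  obtain D where "pure_decomp n \<rho> D" "\<forall>x\<in>set D. abs_sq_vec n (snd x) = diag_vec n \<rho>"
    using uniform_pure_decomp_exists[OF assms(1,3)] .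
  then show "\<exists>D. pure_decomp n \<rho> D \<and> avg_coh n f D = f (diag_vec n \<rho>)"
    using avg_coh_uniform by blast
  show "\<forall>D. pure_decomp n \<rho> D \<longrightarrow> avg_coh n f D \<le> f (diag_vec n \<rho>)"
    using avg_coh_le_diag[OF assms(2)] by blast
qed

end
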